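(* Let $f:I\to\mathbb{Q}_4$ be a $3$-generic conformal geodesic with Frenet frame $e:I\to\mathrm{M\ddot{o}b}(4)$, conformal arclength $s$ and curvatures $\mu_1,\mu_2,\mu_3$ (so $\mu_1+\frac32\mu_2^2=C_1$, $\mu_2^2\mu_3=C_2$, $\dot\mu_2^2+\mu_2^4-2C_1\mu_2^2+C_2^2\mu_2^{-2}=C_3$ for constants $C_1,C_2,C_3$). Let $\Phi(s)=e^{-1}\dot e$ be the $6\times6$ matrix (rows/columns indexed $0,\dots,5$) $$\Phi=\begin{pmatrix}0&\mu_1&1&0&0&0\\1&0&0&0&0&\mu_1\\0&0&0&-\mu_2&0&1\\0&0&\mu_2&0&-\mu_3&0\\0&0&0&\mu_3&0&0\\0&1&0&0&0&0\end{pmatrix},\qquad \Theta=\begin{pmatrix}0&1&-\mu_1-\mu_2^2&\dot\mu_2&\mu_2\mu_3&0\\0&0&0&-\mu_2&0&1\\1&0&0&0&0&-\mu_1-\mu_2^2\\0&\mu_2&0&0&0&\dot\mu_2\\0&0&0&0&0&\mu_2\mu_3\\0&0&1&0&0&0\end{pmatrix}.$$ Then $\dot\Theta=\Theta\Phi-\Phi\Theta$ on $I$; consequently $\omega=e\Theta e^{-1}$ is a constant element of the Lie algebra of $\mathrm{M\ddot{o}b}(4)$, and the characteristic polynomial of $\Theta$ (and of $\omega$) is $$\chi(t)=t^6+2C_1t^4-(1+C_3)t^2-C_2^2 .$$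
   Context: $\mathbb{Q}_4$ is the projectivized null cone of $\langle v,w\rangle=\sum_{A=1}^4v^Aw^A-v^0w^5-v^5w^0$ on $\mathbb{R}^6$; $\mathrm{M\ddot{o}b}(4)$ is the identity component of its isometry group. A Frenet frame along a $3$-generic curve $f$ is a smooth $e=(e_0|\dots|e_5):I\to\mathrm{M\ddot{o}b}(4)$ with $[e_0]=f$ whose Maurer–Cartan form $e^{-1}de$ equals $\Phi\,ds$ with $\Phi$ as displayed, $\mu_2>0$, $\mu_3\neq0$; $s$ is the conformal arclength and dots are $d/ds$. Being a conformal geodesic (critical point of the conformal arclength functional under compactly supported variations) is equivalent, for such curves, to $\dot\mu_1+3\mu_2\dot\mu_2=0$, $\ddot\mu_2=\mu_2^3+2\mu_1\mu_2+\mu_2\mu_3^2$, $2\dot\mu_2\mu_3+\mu_2\dot\mu_3=0$, whose first integrals are the stated relations with constants $C_1,C_2,C_3$. *)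

theory Defs
  imports "HOL-Analysis.Analysis"
begin

datatype idx6 = X0 | X1 | X2 | X3 | X4 | X5

lemma UNIV_idx6: "(UNIV :: idx6 set) = {X0, X1, X2, X3, X4, X5}"
  by (auto intro: idx6.exhaust)

instance idx6 :: finite
  by standard (simp add: UNIV_idx6)

fun ix :: "idx6 \<Rightarrow> nat" where
  "ix X0 = 0" | "ix X1 = 1" | "ix X2 = 2" | "ix X3 = 3" | "ix X4 = 4" | "ix X5 = 5"

definition mat6 :: "real list list \<Rightarrow> real ^ idx6 ^ idx6" where
  "mat6 rs = (\<chi> i j. rs ! ix i ! ix j)"

text \<open>Gram matrix of <v,w> = sum_{A=1..4} v^A w^A - v^0 w^5 - v^5 w^0.\<close>
definition gramJ :: "real ^ idx6 ^ idx6" where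
  "gramJ = mat6 [[0,0,0,0,0,-1],
                 [0,1,0,0,0,0],
                 [0,0,1,0,0,0],
                 [0,0,0,1,0,0],
                 [0,0,0,0,1,0],
                 [-1,0,0,0,0,0]]"

definition isom_group :: "(real ^ idx6 ^ idx6) set" where
  "isom_group = {g. transpose g ** gramJ ** g = gramJ}"

definition Mob4 :: "(real ^ idx6 ^ idx6) set" where
  "Mob4 = connected_component_set isom_group (mat 1)"

definition mob4_lie_algebra :: "(real ^ idx6 ^ idx6) set" where
  "mob4_lie_algebra = {X. transpose X ** gramJ + gramJ ** X = 0}"

definition PhiM :: "real \<Rightarrow> real \<Rightarrow> real \<Rightarrow> real ^ idx6 ^ idx6" where
  "PhiM m1 m2 m3 = mat6
     [[0, m1, 1, 0, 0, 0],
      [1, 0, 0, 0, 0, m1],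
      [0, 0, 0, -m2, 0, 1],
      [0, 0, m2, 0, -m3, 0],
      [0, 0, 0, m3, 0, 0],
      [0, 1, 0, 0, 0, 0]]"

text \<open>Theta, with d2 standing for the derivative of mu_2.\<close>
definition ThetaM :: "real \<Rightarrow> real \<Rightarrow> real \<Rightarrow> real \<Rightarrow> real ^ idx6 ^ idx6" where
  "ThetaM m1 m2 m3 d2 = mat6
     [[0, 1, -m1 - m2^2, d2, m2*m3, 0],
      [0, 0, 0, -m2, 0, 1],
      [1, 0, 0, 0, 0, -m1 - m2^2],
      [0, m2, 0, 0, 0, d2],
      [0, 0, 0, 0, 0, m2*m3],
      [0, 0, 1, 0, 0, 0]]"

end

theory Submission
  imports Defs
begin

(* Theta is affine in the four scalars -mu1-mu2^2, mu2', mu2*mu3, mu2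
       (ThetaM_split), so its derivative is read off coefficientwise; the geodesic equations
       turn the result into the commutator [Theta, Phi] (ThetaM_commutator).
   (2) Conservation.  For any frame e with e' = e Phi, Phi in the Lie algebra of the isometry
       group, and any Theta satisfying Theta' = [Theta, Phi], the conjugate e Theta e^-1 has
       zero derivative, hence is constant on an interval.  Since e takes values in the isometry
       group, e^-1 = J e^T J with J the Gram matrix, which makes the differentiation explicit.
       The constant lies in the Lie algebra because conjugation by isometries preserves it.
   (3) Spectrum.  A direct cofactor expansion gives det (t I - Theta) in terms of mu1, mu2,
       mu2', mu3; the three first integrals rewrite it as chi(t).  Similar matrices have the
       same characteristic polynomial, which transfers chi to the constant omega. *)


lemma matrix_mult_add_right: "((A::'a::semiring_1^'n^'m) + B) ** C = A ** C + B ** C"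
  by (simp add: matrix_matrix_mult_def vec_eq_iff sum.distrib algebra_simps)

lemma matrix_mult_diff_left: "(A::'a::ring_1^'n^'m) ** (B - C) = A ** B - A ** C"
  by (simp add: matrix_matrix_mult_def vec_eq_iff sum_subtractf algebra_simps)

lemma matrix_mult_diff_right: "((A::'a::ring_1^'n^'m) - B) ** C = A ** C - B ** C"
  by (simp add: matrix_matrix_mult_def vec_eq_iff sum_subtractf algebra_simps)

lemma bounded_bilinear_matrix_mult:
  "bounded_bilinear ((**) :: real^'n^'m \<Rightarrow> real^'p^'n \<Rightarrow> real^'p^'m)"
  unfolding bilinear_conv_bounded_bilinear[symmetric] bilinear_def
  by (auto intro!: linearI simp: matrix_add_ldistrib matrix_mult_add_right matrix_scalar_ac
      scalar_matrix_assoc[symmetric])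

lemma bounded_linear_transpose: "bounded_linear (transpose :: real^'n^'m \<Rightarrow> real^'m^'n)"
  unfolding linear_conv_bounded_linear[symmetric]
  by (auto intro!: linearI simp: transpose_def vec_eq_iff)

lemma matrix_inv_eqI:
  fixes A :: "'a::semiring_1^'n^'m"
  assumes AB: "A ** B = mat 1" and BA: "B ** A = mat 1"
  shows "matrix_inv A = B"
proof -
  have inv: "A ** matrix_inv A = mat 1 \<and> matrix_inv A ** A = mat 1"
    unfolding matrix_inv_def using AB BA by (rule someI[where x = B, OF conjI])
  have "matrix_inv A = (B ** A) ** matrix_inv A" using BA by simp
  also have "\<dots> = B" using inv by (simp flip: matrix_mul_assoc)
  finally show ?thesis .
qed

lemma charpoly_similar:
  fixes E F T :: "real^'n^'n"
  assumes "E ** F = mat 1"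
  shows "det (t *\<^sub>R mat 1 - E ** T ** F) = det (t *\<^sub>R mat 1 - T)"
proof -
  have "t *\<^sub>R mat 1 - E ** T ** F = E ** (t *\<^sub>R mat 1 - T) ** F"
    using assms by (simp add: matrix_mult_diff_left matrix_mult_diff_right matrix_scalar_ac
        flip: scalar_matrix_assoc)
  then have "det (t *\<^sub>R mat 1 - E ** T ** F) = (det E * det F) * det (t *\<^sub>R mat 1 - T)"
    by (simp add: det_mul)
  also have "det E * det F = 1"
    using assms by (metis det_I det_mul)
  finally show ?thesis by simp
qed


lemma all_idx6: "(\<forall>i::idx6. P i) \<longleftrightarrow> P X0 \<and> P X1 \<and> P X2 \<and> P X3 \<and> P X4 \<and> P X5"
  by (metis idx6.exhaust)

lemmas mat6_simps =
  vec_eq_iff all_idx6 mat6_def matrix_matrix_mult_def UNIV_idx6 transpose_def mat_def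

lemma gramJ_involution: "gramJ ** gramJ = mat 1"
  by (simp add: gramJ_def mat6_simps)

lemma gramJ_symmetric: "transpose gramJ = gramJ"
  by (simp add: gramJ_def mat6_simps)

lemma gramJ_cancel_right: "M ** gramJ ** gramJ = M"
  by (simp add: gramJ_involution flip: matrix_mul_assoc)

text \<open>Conjugating the defining identity X^T J + J X = 0 by J gives the equivalent form
  J X^T + X J = 0, which is the one arising when differentiating J e^T J.\<close>

lemma lie_algebra_iff_conj:
  "X \<in> mob4_lie_algebra \<longleftrightarrow> gramJ ** transpose X + X ** gramJ = 0"
proof -
  have "gramJ ** (transpose X ** gramJ + gramJ ** X) ** gramJ = gramJ ** transpose X + X ** gramJ"
    and "gramJ ** (gramJ ** transpose X + X ** gramJ) ** gramJ = transpose X ** gramJ + gramJ ** X"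
    by (simp_all add: matrix_add_ldistrib matrix_mult_add_right matrix_mul_assoc
        gramJ_involution gramJ_cancel_right)
  then show ?thesis unfolding mob4_lie_algebra_def by force
qed

lemma isom_group_inverse:
  assumes "g \<in> isom_group"
  shows "(gramJ ** transpose g ** gramJ) ** g = mat 1"
    and "g ** (gramJ ** transpose g ** gramJ) = mat 1"
    and "matrix_inv g = gramJ ** transpose g ** gramJ"
proof -
  show left: "(gramJ ** transpose g ** gramJ) ** g = mat 1"
    using assms unfolding isom_group_def
    by (simp add: gramJ_involution flip: matrix_mul_assoc)
  then show right: "g ** (gramJ ** transpose g ** gramJ) = mat 1"
    using matrix_left_right_inverse by blast
  from right left show "matrix_inv g = gramJ ** transpose g ** gramJ"
    by (rule matrix_inv_eqI)
qed

lemma Mob4_subset_isom_group: "Mob4 \<subseteq> isom_group"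
  unfolding Mob4_def by (rule connected_component_subset)

lemma lie_algebra_conjugate:
  assumes g: "g \<in> isom_group" and X: "X \<in> mob4_lie_algebra"
  shows "g ** X ** matrix_inv g \<in> mob4_lie_algebra"
proof -
  have "transpose (g ** X ** matrix_inv g) ** gramJ + gramJ ** (g ** X ** matrix_inv g)
      = (gramJ ** g) ** ((gramJ ** transpose X + X ** gramJ) ** (transpose g ** gramJ))"
    unfolding isom_group_inverse(3)[OF g]
    by (simp add: matrix_transpose_mul gramJ_symmetric matrix_add_ldistrib matrix_mult_add_right
        matrix_mul_assoc)
  also have "\<dots> = 0"
    using X by (simp add: lie_algebra_iff_conj)
  finally show ?thesis unfolding mob4_lie_algebra_def by simp
qed

lemma PhiM_lie_algebra: "PhiM m1 m2 m3 \<in> mob4_lie_algebra"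
  by (simp add: mob4_lie_algebra_def PhiM_def gramJ_def mat6_simps)

lemma ThetaM_lie_algebra: "ThetaM m1 m2 m3 d2 \<in> mob4_lie_algebra"
  by (simp add: mob4_lie_algebra_def ThetaM_def gramJ_def mat6_simps)


text \<open>Its derivative is
  e Theta J (e Phi)^T J + e Theta Phi J e^T J = e Theta (J Phi^T + Phi J) e^T J = 0.\<close>

lemma conjugate_by_frame_stationary:
  fixes e Phi Theta :: "real \<Rightarrow> real^idx6^idx6"
  assumes de: "(e has_vector_derivative e s ** Phi s) (at s)"
    and dTheta: "(Theta has_vector_derivative Theta s ** Phi s - Phi s ** Theta s) (at s)"
    and Phi_lie: "Phi s \<in> mob4_lie_algebra"
  shows "((\<lambda>x. e x ** Theta x ** (gramJ ** transpose (e x) ** gramJ)) has_vector_derivative 0) (at s)"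
proof -
  note product_rule = bounded_bilinear.has_vector_derivative[OF bounded_bilinear_matrix_mult]
  define E T F where "E = e s" and "T = Theta s" and "F = Phi s"
  have dET: "((\<lambda>x. e x ** Theta x) has_vector_derivative E ** T ** F) (at s)"
    using product_rule[OF de dTheta]
    by (simp add: E_def T_def F_def matrix_mult_diff_left matrix_mul_assoc)
  have dEinv: "((\<lambda>x. gramJ ** transpose (e x) ** gramJ) has_vector_derivative
      gramJ ** transpose (E ** F) ** gramJ) (at s)"
    using product_rule[OF product_rule[OF has_vector_derivative_const
          bounded_linear.has_vector_derivative[OF bounded_linear_transpose de]]
        has_vector_derivative_const]
    by (simp add: E_def F_def)
  have "(E ** T) ** (gramJ ** transpose (E ** F) ** gramJ)
      + (E ** T ** F) ** (gramJ ** transpose E ** gramJ)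
      = (E ** T) ** ((gramJ ** transpose F + F ** gramJ) ** (transpose E ** gramJ))"
    by (simp add: matrix_transpose_mul matrix_mult_add_right matrix_add_ldistrib matrix_mul_assoc)
  also have "\<dots> = 0"
    using Phi_lie by (simp add: F_def lie_algebra_iff_conj)
  finally have "(E ** T) ** (gramJ ** transpose (E ** F) ** gramJ)
      + (E ** T ** F) ** (gramJ ** transpose E ** gramJ) = 0" .
  with product_rule[OF dET dEinv, folded E_def T_def] show ?thesis by simp
qed

lemma conjugate_by_frame_constant:
  fixes e Phi Theta :: "real \<Rightarrow> real^idx6^idx6"
  assumes I: "convex I"
    and iso: "\<And>s. s \<in> I \<Longrightarrow> e s \<in> isom_group"
    and de: "\<And>s. s \<in> I \<Longrightarrow> (e has_vector_derivative e s ** Phi s) (at s)"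
    and dTheta: "\<And>s. s \<in> I \<Longrightarrow>
      (Theta has_vector_derivative Theta s ** Phi s - Phi s ** Theta s) (at s)"
    and Phi_lie: "\<And>s. s \<in> I \<Longrightarrow> Phi s \<in> mob4_lie_algebra"
  obtains \<omega> where "\<And>s. s \<in> I \<Longrightarrow> e s ** Theta s ** matrix_inv (e s) = \<omega>"
proof -
  have stationary: "((\<lambda>x. e x ** Theta x ** (gramJ ** transpose (e x) ** gramJ))
      has_vector_derivative 0) (at s within I)" if "s \<in> I" for s
    using conjugate_by_frame_stationary[where e = e and Phi = Phi and Theta = Theta,
        OF de[OF that] dTheta[OF that] Phi_lie[OF that]]
    by (rule has_vector_derivative_at_within)
  obtain \<omega> where "\<And>s. s \<in> I \<Longrightarrow> e s ** Theta s ** (gramJ ** transpose (e s) ** gramJ) = \<omega>"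
    using has_vector_derivative_zero_constant[OF I stationary] by blast
  with that show ?thesis using isom_group_inverse(3)[OF iso] by simp
qed


definition ThetaLin :: "real \<Rightarrow> real \<Rightarrow> real \<Rightarrow> real \<Rightarrow> real ^ idx6 ^ idx6" where
  "ThetaLin a d c b = mat6
     [[0, 0, a, d, c, 0],
      [0, 0, 0, -b, 0, 0],
      [0, 0, 0, 0, 0, a],
      [0, b, 0, 0, 0, d],
      [0, 0, 0, 0, 0, c],
      [0, 0, 0, 0, 0, 0]]"

lemma ThetaM_split:
  "ThetaM m1 m2 m3 d2 = ThetaM 0 0 0 0 + ThetaLin (- m1 - m2\<^sup>2) d2 (m2 * m3) m2"
  by (simp add: ThetaM_def ThetaLin_def mat6_simps)

lemma ThetaLin_basis:
  "ThetaLin a d c b = a *\<^sub>R ThetaLin 1 0 0 0 + d *\<^sub>R ThetaLin 0 1 0 0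
     + c *\<^sub>R ThetaLin 0 0 1 0 + b *\<^sub>R ThetaLin 0 0 0 1"
  by (simp add: ThetaLin_def mat6_simps)

lemma ThetaLin_has_vector_derivative:
  assumes "(a has_real_derivative a') (at s)" "(d has_real_derivative d') (at s)"
    "(c has_real_derivative c') (at s)" "(b has_real_derivative b') (at s)"
  shows "((\<lambda>x. ThetaLin (a x) (d x) (c x) (b x)) has_vector_derivative ThetaLin a' d' c' b') (at s)"
  unfolding ThetaLin_basis[of "a _"] ThetaLin_basis[of a']
  by (auto intro!: derivative_eq_intros assms)

text \<open>The commutator [Theta, Phi] computed entrywise; the second argument is exactly the
  right-hand side of the second geodesic equation.\<close>

lemma ThetaM_commutator:
  "ThetaM m1 m2 m3 d2 ** PhiM m1 m2 m3 - PhiM m1 m2 m3 ** ThetaM m1 m2 m3 d2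
     = ThetaLin (m2 * d2) (m2^3 + 2*m1*m2 + m2*m3^2) (- d2*m3) d2"
  by (simp add: ThetaM_def PhiM_def ThetaLin_def mat6_simps algebra_simps
      power2_eq_square power3_eq_cube)

lemma geodesic_Theta_Lax:
  fixes mu1 mu2 mu3 :: "real \<Rightarrow> real"
  assumes diff: "mu1 differentiable (at s)" "mu2 differentiable (at s)"
      "deriv mu2 differentiable (at s)" "mu3 differentiable (at s)"
    and geod1: "deriv mu1 s + 3 * mu2 s * deriv mu2 s = 0"
    and geod2: "deriv (deriv mu2) s = mu2 s ^ 3 + 2 * mu1 s * mu2 s + mu2 s * mu3 s ^ 2"
    and geod3: "2 * deriv mu2 s * mu3 s + mu2 s * deriv mu3 s = 0"
  defines "Theta \<equiv> \<lambda>x. ThetaM (mu1 x) (mu2 x) (mu3 x) (deriv mu2 x)"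
    and "Phi \<equiv> \<lambda>x. PhiM (mu1 x) (mu2 x) (mu3 x)"
  shows "(Theta has_vector_derivative Theta s ** Phi s - Phi s ** Theta s) (at s)"
proof -
  have d1: "(mu1 has_real_derivative deriv mu1 s) (at s)"
    and d2: "(mu2 has_real_derivative deriv mu2 s) (at s)"
    and dd2: "(deriv mu2 has_real_derivative deriv (deriv mu2) s) (at s)"
    and d3: "(mu3 has_real_derivative deriv mu3 s) (at s)"
    using diff by (simp_all add: DERIV_deriv_iff_real_differentiable)
  have coeff1: "- deriv mu1 s - 2 * mu2 s * deriv mu2 s = mu2 s * deriv mu2 s"
    using geod1 by linarith
  have coeff3: "deriv mu2 s * mu3 s + mu2 s * deriv mu3 s = - deriv mu2 s * mu3 s"
    using geod3 by linarith
  have Theta_eq: "Theta = (\<lambda>x. ThetaM 0 0 0 0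
      + ThetaLin (- mu1 x - (mu2 x)\<^sup>2) (deriv mu2 x) (mu2 x * mu3 x) (mu2 x))"
    unfolding Theta_def by (rule ext) (rule ThetaM_split)
  have "((\<lambda>x. ThetaLin (- mu1 x - (mu2 x)\<^sup>2) (deriv mu2 x) (mu2 x * mu3 x) (mu2 x))
      has_vector_derivative ThetaLin (mu2 s * deriv mu2 s) (deriv (deriv mu2) s)
        (- deriv mu2 s * mu3 s) (deriv mu2 s)) (at s)"
    unfolding coeff1[symmetric] coeff3[symmetric]
    by (intro ThetaLin_has_vector_derivative d2 dd2)
      (auto intro!: derivative_eq_intros d1 d2 d3)
  then have "(Theta has_vector_derivative ThetaLin (mu2 s * deriv mu2 s) (deriv (deriv mu2) s)
      (- deriv mu2 s * mu3 s) (deriv mu2 s)) (at s)"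
    using has_vector_derivative_add[OF has_vector_derivative_const] unfolding Theta_eq by fastforce
  then show ?thesis
    unfolding Theta_def Phi_def ThetaM_commutator geod2 .
qed


lemma charpoly_ThetaM:
  "det (t *\<^sub>R mat 1 - ThetaM m1 m2 m3 d2) =
     t^6 + (2*m1 + 3*m2^2) * t^4 + (2*m2^4 + 2*m1*m2^2 - 1 - d2^2 - m2^2*m3^2) * t^2 - m2^4*m3^2"
proof -
  have "finite {X1,X2,X3,X4,X5}" "X0 \<notin> {X1,X2,X3,X4,X5}"
    and "finite {X2,X3,X4,X5}" "X1 \<notin> {X2,X3,X4,X5}"
    and "finite {X3,X4,X5}" "X2 \<notin> {X3,X4,X5}"
    and "finite {X4,X5}" "X3 \<notin> {X4,X5}"
    and "finite {X5}" "X4 \<notin> {X5}" by auto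
  note expand = sum_over_permutations_insert[OF this(1,2)] sum_over_permutations_insert[OF this(3,4)]
    sum_over_permutations_insert[OF this(5,6)] sum_over_permutations_insert[OF this(7,8)]
    sum_over_permutations_insert[OF this(9,10)]
  have power6: "(x::real)^6 = x*(x*(x*(x*(x*x))))" for x
    by (simp add: numeral_eq_Suc)
  have entries: "t *\<^sub>R mat 1 - ThetaM m1 m2 m3 d2 = mat6
     [[t, -1, m1 + m2^2, -d2, -m2*m3, 0],
      [0, t, 0, m2, 0, -1],
      [-1, 0, t, 0, 0, m1 + m2^2],
      [0, -m2, 0, t, 0, -d2],
      [0, 0, 0, 0, t, -m2*m3],
      [0, 0, -1, 0, 0, t]]"
    by (simp add: ThetaM_def mat6_simps)
  from entries show ?thesis
    unfolding det_def UNIV_idx6 expand permutes_sing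
    apply (simp add: sign_swap_id permutation_swap_id sign_compose permutation_compose swap_id_eq
        mat6_def)
    apply (simp add: algebra_simps power2_eq_square power4_eq_xxxx power6)
    done
qed

text \<open>Under the three first integrals (and mu2 > 0, needed to clear the term C2^2/mu2^2)
  the characteristic polynomial of Theta is chi, independently of the parameter.\<close>

lemma charpoly_ThetaM_first_integrals:
  assumes m2: "m2 > 0"
    and int1: "m1 + 3/2 * m2 ^ 2 = C1"
    and int2: "m2 ^ 2 * m3 = C2"
    and int3: "d2 ^ 2 + m2 ^ 4 - 2 * C1 * m2 ^ 2 + C2 ^ 2 / m2 ^ 2 = C3"
  shows "det (t *\<^sub>R mat 1 - ThetaM m1 m2 m3 d2) = t ^ 6 + 2 * C1 * t ^ 4 - (1 + C3) * t ^ 2 - C2 ^ 2"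
proof -
  have C3: "C3 = d2 ^ 2 + m2 ^ 4 - 2 * C1 * m2 ^ 2 + m2 ^ 2 * m3 ^ 2"
    using int3 m2 unfolding int2[symmetric] by (auto simp: field_simps power2_eq_square)
  show ?thesis
    unfolding charpoly_ThetaM C3 int1[symmetric] int2[symmetric]
    by (simp add: algebra_simps power2_eq_square power3_eq_cube power4_eq_xxxx)
qed


theorem mainTheorem10:
  fixes I :: "real set"
    and e :: "real \<Rightarrow> real ^ idx6 ^ idx6"
    and mu1 mu2 mu3 :: "real \<Rightarrow> real"
    and C1 C2 C3 :: real
  assumes I_interval: "is_interval I" and I_open: "open I" and I_ne: "I \<noteq> {}"
    and diff: "\<forall>s\<in>I. mu1 differentiable (at s) \<and> mu2 differentiable (at s)
                    \<and> deriv mu2 differentiable (at s) \<and> mu3 differentiable (at s)"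
    and generic: "\<forall>s\<in>I. mu2 s > 0 \<and> mu3 s \<noteq> 0"
    and frame: "\<forall>s\<in>I. e s \<in> Mob4"
    and frenet: "\<forall>s\<in>I. (e has_vector_derivative (e s ** PhiM (mu1 s) (mu2 s) (mu3 s))) (at s)"
    and geod1: "\<forall>s\<in>I. deriv mu1 s + 3 * mu2 s * deriv mu2 s = 0"
    and geod2: "\<forall>s\<in>I. deriv (deriv mu2) s
                   = mu2 s ^ 3 + 2 * mu1 s * mu2 s + mu2 s * mu3 s ^ 2"
    and geod3: "\<forall>s\<in>I. 2 * deriv mu2 s * mu3 s + mu2 s * deriv mu3 s = 0"
    and int1: "\<forall>s\<in>I. mu1 s + 3/2 * mu2 s ^ 2 = C1"
    and int2: "\<forall>s\<in>I. mu2 s ^ 2 * mu3 s = C2"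
    and int3: "\<forall>s\<in>I. deriv mu2 s ^ 2 + mu2 s ^ 4 - 2 * C1 * mu2 s ^ 2
                   + C2 ^ 2 / mu2 s ^ 2 = C3"
  defines "Theta \<equiv> (\<lambda>s. ThetaM (mu1 s) (mu2 s) (mu3 s) (deriv mu2 s))"
      and "Phi \<equiv> (\<lambda>s. PhiM (mu1 s) (mu2 s) (mu3 s))"
      and "chi \<equiv> (\<lambda>t::real. t ^ 6 + 2 * C1 * t ^ 4 - (1 + C3) * t ^ 2 - C2 ^ 2)"
  shows "(\<forall>s\<in>I. (Theta has_vector_derivative (Theta s ** Phi s - Phi s ** Theta s)) (at s))
       \<and> (\<exists>\<omega>\<in>mob4_lie_algebra. (\<forall>s\<in>I. e s ** Theta s ** matrix_inv (e s) = \<omega>)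
              \<and> (\<forall>t. det (t *\<^sub>R mat 1 - \<omega>) = chi t))
       \<and> (\<forall>s\<in>I. \<forall>t. det (t *\<^sub>R mat 1 - Theta s) = chi t)"
proof -
  have Lax: "(Theta has_vector_derivative Theta s ** Phi s - Phi s ** Theta s) (at s)"
    if "s \<in> I" for s
    unfolding Theta_def Phi_def using that diff geod1 geod2 geod3 by (intro geodesic_Theta_Lax) auto
  have charpoly: "det (t *\<^sub>R mat 1 - Theta s) = chi t" if "s \<in> I" for s t
    unfolding Theta_def chi_def using that generic int1 int2 int3
    by (intro charpoly_ThetaM_first_integrals) auto
  have iso: "e s \<in> isom_group" if "s \<in> I" for s
    using frame that Mob4_subset_isom_group by blast
  obtain \<omega> where \<omega>: "\<And>s. s \<in> I \<Longrightarrow> e s ** Theta s ** matrix_inv (e s) = \<omega>"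
    using conjugate_by_frame_constant[of I e Phi Theta] I_interval iso frenet Lax PhiM_lie_algebra
    unfolding Phi_def by (auto simp: is_interval_convex)
  obtain s0 where s0: "s0 \<in> I" using I_ne by blast
  have "e s0 ** Theta s0 ** matrix_inv (e s0) \<in> mob4_lie_algebra"
    unfolding Theta_def by (rule lie_algebra_conjugate[OF iso[OF s0] ThetaM_lie_algebra])
  then have "\<omega> \<in> mob4_lie_algebra" using \<omega>[OF s0] by simp
  moreover have "det (t *\<^sub>R mat 1 - \<omega>) = chi t" for t
  proof -
    have "det (t *\<^sub>R mat 1 - \<omega>) = det (t *\<^sub>R mat 1 - Theta s0)"
      unfolding \<omega>[OF s0, symmetric] isom_group_inverse(3)[OF iso[OF s0]]
      by (rule charpoly_similar[OF isom_group_inverse(2)[OF iso[OF s0]]])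
    also have "\<dots> = chi t" by (rule charpoly[OF s0])
    finally show ?thesis .
  qed
  ultimately show ?thesis
    using Lax \<omega> charpoly by (intro conjI ballI allI bexI[of _ \<omega>]) auto
qed

end
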